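(* Let $\psi:\mathbb R^n\to\mathbb R$ be convex, $x_0\in\mathbb R^n$ with $\psi(x_0)=0$ and $0\in\partial\psi(x_0)$, $t>0$, and let $A$ be a positive definite symmetric matrix such that $S=S(x_0,0,t)$ satisfies $\{x:|x|_A\le1\}\subset S\subset\{x:|x|_A\le n\}$. Then there exist a constant $c>0$ depending only on $n$ and a set $V\subset\partial\psi(S)$ such that $$|V|\ge c\,\frac{t^n}{|S|},\qquad \Sigma:=\partial\psi^*(V)\subset S,$$ and for all $q\in V$ and $y_0\in\partial\psi^*(q)$, $$\psi(y)-\psi(y_0)\ge\frac{t}{8n^2}|y-y_0|_A^2+q\cdot(y-y_0)\qquad\text{for all } y\in\{x:|x|_A\le2n\}.$$ (In particular $\partial\psi^*(q)=\{y_0\}$ for every $q\in V$.)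
   Context: $|x|_A=\sqrt{x^*Ax}$. Sections: $S(x_0,p_0,t)=\{x:\psi(x)\le\psi(x_0)+p_0\cdot(x-x_0)+t\}$. $\psi^*$ is the Legendre transform and $\partial\psi^*(V)=\bigcup_{q\in V}\partial\psi^*(q)$; $|\cdot|$ is Lebesgue measure. *)

theory Defs
  imports "HOL-Analysis.Analysis"
begin

definition normA :: "real^'n^'n \<Rightarrow> real^'n \<Rightarrow> real" where
  "normA A x = sqrt (x \<bullet> (A *v x))"

definition pos_def_sym :: "real^'n^'n \<Rightarrow> bool" where
  "pos_def_sym A \<longleftrightarrow> transpose A = A \<and> (\<forall>x. x \<noteq> 0 \<longrightarrow> x \<bullet> (A *v x) > 0)"

definition sect :: "(real^'n \<Rightarrow> real) \<Rightarrow> real^'n \<Rightarrow> real^'n \<Rightarrow> real \<Rightarrow> (real^'n) set" where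
  "sect \<psi> x0 p0 t = {x. \<psi> x \<le> \<psi> x0 + p0 \<bullet> (x - x0) + t}"

definition subdiff :: "(real^'n \<Rightarrow> real) \<Rightarrow> real^'n \<Rightarrow> (real^'n) set" where
  "subdiff \<psi> x = {p. \<forall>y. \<psi> y \<ge> \<psi> x + p \<bullet> (y - x)}"

definition subdiff_set :: "(real^'n \<Rightarrow> real) \<Rightarrow> (real^'n) set \<Rightarrow> (real^'n) set" where
  "subdiff_set \<psi> E = (\<Union>x\<in>E. subdiff \<psi> x)"

definition legendre :: "(real^'n \<Rightarrow> real) \<Rightarrow> real^'n \<Rightarrow> ereal" where
  "legendre \<psi> q = (SUP x. ereal (q \<bullet> x - \<psi> x))"

definition subdiff_ereal :: "(real^'n \<Rightarrow> ereal) \<Rightarrow> real^'n \<Rightarrow> (real^'n) set" where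
  "subdiff_ereal f q = {y. \<bar>f q\<bar> \<noteq> \<infinity> \<and> (\<forall>q'. f q' \<ge> f q + ereal (y \<bullet> (q' - q)))}"

definition subdiff_ereal_set :: "(real^'n \<Rightarrow> ereal) \<Rightarrow> (real^'n) set \<Rightarrow> (real^'n) set" where
  "subdiff_ereal_set f V = (\<Union>q\<in>V. subdiff_ereal f q)"

end

theory Submission
  imports Defs
begin

text \<open>
  Change variables by a linear map \<open>g\<close> with \<open>|g z|\<^sub>A = |z|\<close>, so that \<open>\<phi> = \<psi> \<circ> g\<close> has its
  section \<open>{\<phi> \<le> t}\<close> between the unit ball and the ball of radius \<open>n\<close>. Let \<open>curv = t/(8n\<^sup>2)\<close>,
  \<open>rad = t/(6n)\<close>, and consider the slopes \<open>p\<close> of paraboloids \<open>curv |z - z0|\<^sup>2 + p \<bullet> (z - z0)\<close>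
  that touch \<open>\<phi>\<close> from below at a point \<open>z0\<close> of the ball of radius \<open>2n\<close>, with
  \<open>|p - 2 curv z0| \<le> rad\<close>. Minimizing \<open>\<phi> - curv |z|\<^sup>2\<close> minus a small linear function shows that
  \<open>p \<mapsto> p - 2 curv z0\<close> maps these slopes onto the ball of radius \<open>rad\<close>, and strong monotonicity
  makes this map nonexpansive, so the set of slopes is at least as large as that ball. A touching
  point lies in the section, and by convexity \<open>\<phi>\<close> grows quadratically near it and linearly far
  away, which forces \<open>\<partial>\<phi>\<^sup>*(p) = {z0}\<close>. Going back through \<open>g\<close>, the volume of the slope set is
  divided by \<open>|det g|\<close>, while the section has volume at least \<open>|det g|\<close> times that of the unit ball.
\<close>

section \<open>Lebesgue measure of linear images over arbitrary finite index types\<close>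

lemma compact_linear_image:
  fixes f :: "'a::euclidean_space \<Rightarrow> 'b::real_normed_vector"
  shows "linear f \<Longrightarrow> compact S \<Longrightarrow> compact (f ` S)"
  by (intro compact_continuous_image linear_continuous_on linear_conv_bounded_linear[THEN iffD1])

text \<open>A copy of a finite index type carrying a well-order: the determinant formula
  \<open>measure_linear_image\<close> is only available for well-ordered index types.\<close>

datatype 'a idx = Idx (un_idx: 'a)

lemma range_Idx: "range Idx = UNIV"
  by (metis idx.exhaust surj_def)

instance idx :: (finite) finite
  by standard (metis finite_imageI finite range_Idx)

definition idx_code :: "'a::finite idx \<Rightarrow> nat" where
  "idx_code = (SOME f. inj f)"

lemma inj_idx_code: "inj idx_code"
proof -
  obtain f :: "'a idx \<Rightarrow> nat" and n where "inj f"
    using finite_imp_inj_to_nat_seg[of "UNIV :: 'a idx set"] by blast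
  then show ?thesis unfolding idx_code_def by (metis someI_ex)
qed

instantiation idx :: (finite) linorder
begin
definition less_eq_idx :: "'a idx \<Rightarrow> 'a idx \<Rightarrow> bool" where
  "i \<le> j \<longleftrightarrow> idx_code i \<le> idx_code j"
definition less_idx :: "'a idx \<Rightarrow> 'a idx \<Rightarrow> bool" where
  "i < j \<longleftrightarrow> idx_code i < idx_code j"
instance
  by standard (auto simp: less_eq_idx_def less_idx_def dest: injD[OF inj_idx_code])
end

instance idx :: (finite) wellorder
proof
  fix P :: "'a idx \<Rightarrow> bool" and i
  assume step: "\<And>i. (\<And>j. j < i \<Longrightarrow> P j) \<Longrightarrow> P i"
  have "\<forall>i. idx_code i = m \<longrightarrow> P i" for m
    by (induction m rule: less_induct) (metis step less_idx_def)
  then show "P i" by blast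
qed

lemma det_reindex:
  fixes A :: "'a::comm_ring_1^'n^'n" and e :: "'m::finite \<Rightarrow> 'n"
  assumes e: "bij e"
  shows "det (\<chi> i j. A $ e i $ e j) = det A"
proof -
  let ?P = "\<lambda>p. map_permutation UNIV e p"
  have inj_e: "inj e" using e by (simp add: bij_is_inj)
  have bij_P: "bij_betw ?P {p. p permutes (UNIV :: 'm set)} {q. q permutes (UNIV :: 'n set)}"
  proof (rule bij_betw_byWitness[where f' = "map_permutation UNIV (inv e)"])
    show "\<forall>p\<in>{p. p permutes UNIV}. map_permutation UNIV (inv e) (?P p) = p"
      using e by (auto intro!: map_permutation_compose_inv simp: bij_is_inj)
    show "\<forall>q\<in>{q. q permutes UNIV}. ?P (map_permutation UNIV (inv e) q) = q"
      using e
      by (auto intro!: map_permutation_compose_inv bij_betw_inv_into simp: bij_is_surj surj_f_inv_f)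
    show "?P ` {p. p permutes UNIV} \<subseteq> {q. q permutes UNIV}"
      using e by (auto intro: map_permutation_permutes)
    show "map_permutation UNIV (inv e) ` {q. q permutes UNIV} \<subseteq> {p. p permutes UNIV}"
      using e by (auto intro: map_permutation_permutes bij_imp_bij_inv)
  qed
  have term_eq: "of_int (sign (?P p)) * (\<Prod>i\<in>UNIV. A $ i $ ?P p i)
      = of_int (sign p) * (\<Prod>i\<in>UNIV. A $ e i $ e (p i))" if p: "p permutes UNIV" for p
  proof -
    have "(\<Prod>i\<in>UNIV. A $ i $ ?P p i) = (\<Prod>i\<in>UNIV. A $ e i $ ?P p (e i))"
      by (rule prod.reindex_bij_betw[symmetric]) (use e in \<open>simp add: bij_betw_def\<close>)
    also have "\<dots> = (\<Prod>i\<in>UNIV. A $ e i $ e (p i))"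
      using inj_e by (simp add: map_permutation_apply)
    finally show ?thesis
      using sign_map_permutation[OF inj_e p finite] by simp
  qed
  have "det A
      = (\<Sum>p | p permutes (UNIV :: 'm set). of_int (sign (?P p)) * (\<Prod>i\<in>UNIV. A $ i $ ?P p i))"
    unfolding det_def by (rule sum.reindex_bij_betw[OF bij_P, symmetric])
  also have "\<dots> = det (\<chi> i j. A $ e i $ e j)"
    unfolding det_def by (rule sum.cong) (simp_all add: term_eq)
  finally show ?thesis ..
qed

definition to_idx :: "real^'n \<Rightarrow> real^'n idx" where
  "to_idx x = (\<chi> j. x $ un_idx j)"

definition from_idx :: "real^'n idx \<Rightarrow> real^'n" where
  "from_idx y = (\<chi> i. y $ Idx i)"

lemma from_to_idx [simp]: "from_idx (to_idx x) = x"
  by (simp add: from_idx_def to_idx_def vec_eq_iff)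

lemma to_from_idx [simp]: "to_idx (from_idx y) = y"
  by (simp add: from_idx_def to_idx_def vec_eq_iff)

lemma linear_to_idx: "linear to_idx"
  by (auto simp: linear_iff to_idx_def vec_eq_iff)

lemma linear_from_idx: "linear from_idx"
  by (auto simp: linear_iff from_idx_def vec_eq_iff)

lemma image_to_idx: "to_idx ` X = from_idx -` X"
  by (auto simp: image_iff) (metis to_from_idx)

lemma bij_un_idx: "bij un_idx"
  by (rule bij_betw_byWitness[where f' = Idx]) auto

lemma from_idx_axis: "from_idx (axis j c) = axis (un_idx j) c"
  by (cases j) (auto simp: from_idx_def axis_def vec_eq_iff)

lemma all_idx: "(\<forall>j. P j) \<longleftrightarrow> (\<forall>i. P (Idx i))"
  by (metis idx.exhaust)

lemma prod_idx: "(\<Prod>j\<in>UNIV. f j) = (\<Prod>i\<in>UNIV. f (Idx i))"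
  by (rule prod.reindex_bij_betw[symmetric]) (simp add: bij_betw_def inj_def range_Idx)

lemma prod_Basis_cart: "(\<Prod>b\<in>Basis. x \<bullet> b) = (\<Prod>i\<in>UNIV. x $ i)"
  by (simp add: Basis_vec_def cart_eq_inner_axis axis_eq_axis prod.UNION_disjoint)

lemma from_idx_measurable: "from_idx \<in> borel_measurable borel"
  by (intro borel_measurable_continuous_onI linear_continuous_on linear_conv_bounded_linear[THEN iffD1]
      linear_from_idx)

lemma distr_from_idx: "distr lborel borel from_idx = (lborel :: (real^'n::finite) measure)"
proof (rule lborel_eqI[symmetric])
  fix l u :: "real^'n"
  assume lu_Basis: "\<And>b. b \<in> Basis \<Longrightarrow> l \<bullet> b \<le> u \<bullet> b"
  have lu: "l $ i \<le> u $ i" for i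
    using lu_Basis[of "axis i 1"] by (simp add: inner_axis)
  have "from_idx -` box l u = box (to_idx l) (to_idx u)"
  proof (rule set_eqI)
    fix y :: "real^'n idx"
    show "y \<in> from_idx -` box l u \<longleftrightarrow> y \<in> box (to_idx l) (to_idx u)"
      unfolding mem_box_cart vimage_eq from_idx_def to_idx_def vec_lambda_beta
      by (subst all_idx[where P = "\<lambda>j. l $ un_idx j < y $ j \<and> y $ j < u $ un_idx j"]) simp
  qed
  then have "emeasure (distr lborel borel from_idx) (box l u)
      = emeasure lborel (box (to_idx l) (to_idx u))"
    using emeasure_distr[of from_idx lborel borel "box l u"] from_idx_measurable by simp
  also have "\<dots> = (\<Prod>b\<in>Basis. (to_idx u - to_idx l) \<bullet> b)"
    by (auto simp: emeasure_lborel_box_eq Basis_vec_def inner_axis to_idx_def lu)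
  also have "\<dots> = (\<Prod>b\<in>Basis. (u - l) \<bullet> b)"
    by (simp add: prod_Basis_cart prod_idx to_idx_def)
  finally show "emeasure (distr lborel borel from_idx) (box l u) = (\<Prod>b\<in>Basis. (u - l) \<bullet> b)" .
qed simp

lemma measure_image_to_idx:
  assumes "X \<in> sets borel"
  shows "measure lebesgue (to_idx ` X) = measure lebesgue (X :: (real^'n::finite) set)"
proof -
  have "to_idx ` X \<in> sets borel"
    using measurable_sets[OF from_idx_measurable assms] by (simp add: image_to_idx)
  moreover have "emeasure lborel X = emeasure (distr lborel borel from_idx) X"
    by (simp only: distr_from_idx)
  then have "emeasure lborel X = emeasure lborel (from_idx -` X)"
    using emeasure_distr[of from_idx lborel borel X] assms from_idx_measurable by simp
  ultimately show ?thesis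
    using assms by (simp add: measure_completion measure_def image_to_idx)
qed

lemma measure_linear_image_compact:
  fixes f :: "real^'n::finite \<Rightarrow> real^'n"
  assumes f: "linear f" and S: "compact S"
  shows "measure lebesgue (f ` S) = \<bar>det (matrix f)\<bar> * measure lebesgue S"
proof -
  define f' where "f' = to_idx \<circ> f \<circ> from_idx"
  have "linear f'"
    unfolding f'_def by (intro linear_compose linear_to_idx linear_from_idx f)
  have "matrix f' = (\<chi> i j. matrix f $ un_idx i $ un_idx j)"
    by (simp add: matrix_def f'_def to_idx_def from_idx_axis)
  then have det_f': "det (matrix f') = det (matrix f)"
    by (simp add: det_reindex bij_un_idx)
  have "to_idx ` f ` S = f' ` to_idx ` S"
    by (simp add: f'_def image_comp o_assoc[symmetric] comp_def)
  then have "measure lebesgue (f ` S) = measure lebesgue (f' ` to_idx ` S)"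
    using measure_image_to_idx[OF borel_compact[OF compact_linear_image[OF f S]]] by simp
  also have "\<dots> = \<bar>det (matrix f')\<bar> * measure lebesgue (to_idx ` S)"
    by (intro measure_linear_image \<open>linear f'\<close> lmeasurable_compact compact_linear_image
        linear_to_idx S)
  also have "\<dots> = \<bar>det (matrix f)\<bar> * measure lebesgue S"
    using det_f' measure_image_to_idx[OF borel_compact[OF S]] by simp
  finally show ?thesis .
qed

section \<open>Linear changes of variables\<close>

lemma adjoint_inner: "linear g \<Longrightarrow> adjoint g q \<bullet> z = q \<bullet> g z"
  for g :: "'a::euclidean_space \<Rightarrow> 'b::euclidean_space"
  by (simp add: adjoint_works inner_commute)

lemma bij_adjoint:
  fixes g :: "'a::euclidean_space \<Rightarrow> 'a"
  assumes g: "linear g" "bij g"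
  shows "bij (adjoint g)"
proof -
  have "inj (adjoint g)"
  proof (rule linear_injective_0[THEN iffD2, OF adjoint_linear[OF g(1)]], intro allI impI)
    fix p assume "adjoint g p = 0"
    then have "p \<bullet> g (inv g p) = 0" by (metis adjoint_inner g(1) inner_zero_left)
    then show "p = 0" using g(2) by (simp add: bij_is_surj surj_f_inv_f)
  qed
  then show ?thesis
    by (simp add: bij_def linear_inj_imp_surj adjoint_linear[OF g(1)])
qed

lemma convex_on_linear_comp: "linear g \<Longrightarrow> convex_on UNIV f \<Longrightarrow> convex_on UNIV (f \<circ> g)"
  by (auto simp: convex_on_def linear_add linear_scale)

lemma compact_linear_vimage:
  fixes f :: "'a::euclidean_space \<Rightarrow> 'a"
  assumes "linear f" "bij f" "compact Y"
  shows "compact (f -` Y)"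
proof -
  have "f -` Y = inv f ` Y" using assms(2) by (rule bij_vimage_eq_inv_image)
  then show ?thesis
    using assms by (simp add: compact_linear_image inj_linear_imp_inv_linear bij_is_inj)
qed

lemma measure_image_mult_measure_adjoint_vimage:
  fixes g :: "real^'n::finite \<Rightarrow> real^'n"
  assumes g: "linear g" "bij g" and X: "compact X" and Y: "compact Y"
  shows "measure lebesgue (g ` X) * measure lebesgue (adjoint g -` Y)
       = measure lebesgue X * measure lebesgue Y"
proof -
  have lin': "linear (adjoint g)" and bij': "bij (adjoint g)"
    using g by (simp_all add: adjoint_linear bij_adjoint)
  have "adjoint g ` (adjoint g -` Y) = Y"
    using bij' by (simp add: image_vimage_eq bij_is_surj)
  then have "measure lebesgue Y = \<bar>det (matrix g)\<bar> * measure lebesgue (adjoint g -` Y)"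
    using measure_linear_image_compact[OF lin' compact_linear_vimage[OF lin' bij' Y]]
    by (simp add: matrix_adjoint[OF g(1)])
  then show ?thesis
    by (simp add: measure_linear_image_compact[OF g(1) X])
qed

section \<open>Coordinates normalizing a positive definite form\<close>

lemma bilinear_sum_right: "bilinear B \<Longrightarrow> B x (\<Sum>i\<in>I. f i) = (\<Sum>i\<in>I. B x (f i))"
  using linear_sum[of "B x"] by (simp add: bilinear_def)

lemma bilinear_sum_left: "bilinear B \<Longrightarrow> B (\<Sum>i\<in>I. f i) y = (\<Sum>i\<in>I. B (f i) y)"
  using linear_sum[of "\<lambda>x. B x y"] by (simp add: bilinear_def)

lemma bilinear_orthogonal_residual:
  fixes B :: "'a::real_vector \<Rightarrow> 'a \<Rightarrow> real"
  assumes B: "bilinear B" and pos: "\<And>x. x \<noteq> 0 \<Longrightarrow> B x x > 0"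
    and U: "finite U" "0 \<notin> U" "pairwise (\<lambda>x y. B x y = 0) U" and c: "c \<in> U"
  shows "B c (a - (\<Sum>b\<in>U. (B b a / B b b) *\<^sub>R b)) = 0"
proof -
  have "B c c > 0" using pos c U(2) by metis
  have "B c (\<Sum>b\<in>U. (B b a / B b b) *\<^sub>R b) = (\<Sum>b\<in>U. B b a / B b b * B c b)"
    by (simp add: bilinear_sum_right[OF B] bilinear_rmul[OF B])
  also have "\<dots> = (\<Sum>b\<in>U. if b = c then B c a else 0)"
    using U(3) c \<open>B c c > 0\<close> by (intro sum.cong refl) (auto simp: pairwise_def)
  also have "\<dots> = B c a" using c U(1) by simp
  finally show ?thesis by (simp add: bilinear_rsub[OF B])
qed

lemma Gram_Schmidt_bilinear:
  fixes B :: "'a::real_vector \<Rightarrow> 'a \<Rightarrow> real"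
  assumes B: "bilinear B" and sym: "\<And>x y. B x y = B y x" and pos: "\<And>x. x \<noteq> 0 \<Longrightarrow> B x x > 0"
    and "finite T"
  shows "\<exists>U. finite U \<and> 0 \<notin> U \<and> pairwise (\<lambda>x y. B x y = 0) U \<and> span U = span T"
  using \<open>finite T\<close>
proof (induction T rule: finite_induct)
  case empty
  show ?case by (intro exI[of _ "{}"]) auto
next
  case (insert a T)
  then obtain U where U: "finite U" "0 \<notin> U" "pairwise (\<lambda>x y. B x y = 0) U" "span U = span T"
    by blast
  define a' where "a' = a - (\<Sum>b\<in>U. (B b a / B b b) *\<^sub>R b)"
  have orth: "B c a' = 0" if "c \<in> U" for c
    unfolding a'_def by (rule bilinear_orthogonal_residual[OF B pos U(1-3) that])
  have a_a': "a - a' \<in> span U"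
    unfolding a'_def by (simp add: span_sum span_mul span_base)
  show ?case
  proof (cases "a' = 0")
    case True
    then have "span (insert a T) = span T"
      using a_a' U(4) by (simp add: span_redundant)
    then show ?thesis using U by blast
  next
    case False
    have "a' \<notin> U" using orth[of a'] pos[OF False] by auto
    have "span (insert a' U) = span (insert a U)"
      by (rule eq_span_insert_eq) (metis a_a' minus_diff_eq span_neg)
    also have "\<dots> = span (insert a T)"
      using U(4) by (simp add: span_insert)
    finally show ?thesis
      using U False orth sym by (intro exI[of _ "insert a' U"]) (auto simp: pairwise_insert)
  qed
qed

lemma pairwise_orthogonal_form_independent:
  fixes B :: "'a::real_vector \<Rightarrow> 'a \<Rightarrow> real"
  assumes B: "bilinear B" and pos: "\<And>x. x \<noteq> 0 \<Longrightarrow> B x x > 0"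
    and U: "0 \<notin> U" "pairwise (\<lambda>x y. B x y = 0) U"
  shows "independent U"
  unfolding dependent_def
proof clarify
  fix a assume a: "a \<in> U" and "a \<in> span (U - {a})"
  then obtain S u where S: "finite S" "S \<subseteq> U - {a}" "(\<Sum>v\<in>S. u v *\<^sub>R v) = a"
    unfolding span_explicit by blast
  have "B a a = (\<Sum>v\<in>S. u v * B a v)"
    by (simp flip: S(3) add: bilinear_sum_right[OF B] bilinear_rmul[OF B])
  also have "\<dots> = 0"
  proof (intro sum.neutral ballI)
    fix v assume "v \<in> S"
    then have "v \<in> U" "v \<noteq> a" using S(2) by auto
    then show "u v * B a v = 0" using U(2) a by (simp add: pairwise_def)
  qed
  finally show False
    using pos[of a] a U(1) by auto
qed

lemma exists_orthonormal_family_form: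
  fixes B :: "'a::euclidean_space \<Rightarrow> 'a \<Rightarrow> real"
  assumes B: "bilinear B" and sym: "\<And>x y. B x y = B y x" and pos: "\<And>x. x \<noteq> 0 \<Longrightarrow> B x x > 0"
  shows "\<exists>b :: 'a \<Rightarrow> 'a. \<forall>i\<in>Basis. \<forall>j\<in>Basis. B (b i) (b j) = (if i = j then 1 else 0)"
proof -
  obtain U where U: "finite U" "0 \<notin> U" "pairwise (\<lambda>x y. B x y = 0) U" "span U = span Basis"
    using Gram_Schmidt_bilinear[OF B sym pos finite_Basis] by blast
  have "card U = DIM('a)"
    using pairwise_orthogonal_form_independent[OF B pos U(2,3)] U(4)
    by (metis basis_card_eq_dim dim_UNIV span_Basis span_superset top_greatest)
  then obtain e where e: "bij_betw e (Basis :: 'a set) U"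
    using finite_same_card_bij[of "Basis :: 'a set" U] U(1) by auto
  define b where "b i = (1 / sqrt (B (e i) (e i))) *\<^sub>R e i" for i
  have "B (b i) (b j) = (if i = j then 1 else 0)" if "i \<in> Basis" "j \<in> Basis" for i j
  proof -
    have "e i \<in> U" "e j \<in> U" "e i \<noteq> 0"
      using e that U(2) by (auto simp: bij_betw_def)
    moreover have "i \<noteq> j \<Longrightarrow> e i \<noteq> e j"
      using e that by (auto simp: bij_betw_def inj_on_def)
    ultimately show ?thesis
      using U(3) pos[of "e i"] unfolding b_def
      by (auto simp: bilinear_lmul[OF B] bilinear_rmul[OF B] pairwise_def
          real_sqrt_mult[symmetric] field_simps)
  qed
  then show ?thesis by blast
qed

lemma exists_linear_normalizing_form:
  fixes B :: "'a::euclidean_space \<Rightarrow> 'a \<Rightarrow> real"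
  assumes B: "bilinear B" and sym: "\<And>x y. B x y = B y x" and pos: "\<And>x. x \<noteq> 0 \<Longrightarrow> B x x > 0"
  obtains g :: "'a \<Rightarrow> 'a" where "linear g" "bij g" "\<And>z. B (g z) (g z) = z \<bullet> z"
proof -
  obtain b :: "'a \<Rightarrow> 'a"
    where Bb: "\<And>i j. i \<in> Basis \<Longrightarrow> j \<in> Basis \<Longrightarrow> B (b i) (b j) = (if i = j then 1 else 0)"
    using exists_orthonormal_family_form[OF B sym pos] by blast
  define g where "g z = (\<Sum>i\<in>Basis. (z \<bullet> i) *\<^sub>R b i)" for z
  have "linear g"
    unfolding linear_iff g_def
    by (simp add: inner_add_left scaleR_add_left sum.distrib scaleR_sum_right)
  moreover have gg: "B (g z) (g z) = z \<bullet> z" for z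
  proof -
    have "B (g z) (g z) = (\<Sum>i\<in>Basis. (z \<bullet> i) * (\<Sum>j\<in>Basis. (z \<bullet> j) * B (b j) (b i)))"
      unfolding g_def
      by (simp add: bilinear_sum_left[OF B] bilinear_sum_right[OF B] bilinear_lmul[OF B]
          bilinear_rmul[OF B] sum_distrib_left)
    also have "\<dots> = (\<Sum>i\<in>Basis. (z \<bullet> i) * (z \<bullet> i))"
      by (intro sum.cong refl) (simp add: Bb if_distrib[of "\<lambda>x. _ * x"] cong: if_cong)
    finally show ?thesis by (simp add: euclidean_inner[of z z])
  qed
  moreover have "inj g"
  proof (rule linear_injective_0[THEN iffD2, OF \<open>linear g\<close>], intro allI impI)
    fix z assume "g z = 0"
    then show "z = 0" using gg[of z] bilinear_lzero[OF B] by simp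
  qed
  ultimately show ?thesis
    by (intro that[of g]) (auto simp: bij_def linear_inj_imp_surj)
qed

lemma bilinear_matrix_form: "bilinear (\<lambda>x y. x \<bullet> ((A :: real^'n^'m) *v y))"
  unfolding bilinear_def
  by (auto simp: linear_iff inner_add_left inner_add_right matrix_vector_right_distrib
      matrix_vector_mult_scaleR)

lemma exists_normA_isometry:
  assumes "pos_def_sym A"
  obtains g :: "real^'n \<Rightarrow> real^'n" where "linear g" "bij g" "\<And>z. normA A (g z) = norm z"
proof -
  have "\<And>x y. x \<bullet> (A *v y) = y \<bullet> (A *v x)"
    using assms unfolding pos_def_sym_def
    by (metis dot_lmul_matrix inner_commute transpose_transpose vector_transpose_matrix)
  then obtain g :: "real^'n \<Rightarrow> real^'n" where "linear g" "bij g" "\<And>z. g z \<bullet> (A *v g z) = z \<bullet> z"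
    using exists_linear_normalizing_form[OF bilinear_matrix_form] assms
    unfolding pos_def_sym_def by metis
  then show ?thesis
    by (intro that[of g]) (simp_all add: normA_def norm_eq_sqrt_inner)
qed

section \<open>Measure of nonexpansive images\<close>

lemma emeasure_UN_countable_le:
  assumes I: "countable I" and sets: "\<And>i. i \<in> I \<Longrightarrow> X i \<in> sets M"
  shows "emeasure M (\<Union>(X ` I)) \<le> (\<integral>\<^sup>+i. emeasure M (X i) \<partial>count_space I)"
proof -
  have meas[measurable]: "\<Union>(X ` I) \<in> sets M"
    using sets I by (intro sets.countable_UN') auto
  have le: "indicator (\<Union>(X ` I)) x \<le> (\<integral>\<^sup>+ i. indicator (X i) x \<partial>count_space I)" for x
  proof (cases "x \<in> \<Union>(X ` I)")
    case True
    then obtain j where j: "j \<in> I" "x \<in> X j" by auto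
    have "1 = (\<integral>\<^sup>+ i. indicator {j} i \<partial>count_space I)"
      using j by (simp add: emeasure_count_space_finite)
    also have "\<dots> \<le> (\<integral>\<^sup>+ i. indicator (X i) x \<partial>count_space I)"
      by (rule nn_integral_mono) (auto simp: j(2) split: split_indicator)
    finally show ?thesis using True by simp
  qed simp
  have "emeasure M (\<Union>(X ` I)) = (\<integral>\<^sup>+x. indicator (\<Union>(X ` I)) x \<partial>M)"
    by simp
  also have "\<dots> \<le> (\<integral>\<^sup>+x. \<integral>\<^sup>+ i. indicator (X i) x \<partial>count_space I \<partial>M)"
    by (rule nn_integral_mono) (rule le)
  also have "\<dots> = (\<integral>\<^sup>+i. \<integral>\<^sup>+x. indicator (X i) x \<partial>M \<partial>count_space I)"
    by (rule nn_integral_count_space_nn_integral[OF I]) (use sets in auto)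
  also have "\<dots> = (\<integral>\<^sup>+i. emeasure M (X i) \<partial>count_space I)"
    by (rule nn_integral_cong) (use sets in auto)
  finally show ?thesis .
qed

lemma Vitali_cballs_in_open:
  fixes W :: "'a::euclidean_space set"
  assumes U: "open U" "W \<subseteq> U"
  obtains C where "countable C"
    and "\<And>i. i \<in> C \<Longrightarrow> fst i \<in> W \<and> 0 < snd i \<and> cball (fst i) (snd i) \<subseteq> U"
    and "disjoint_family_on (\<lambda>i. cball (fst i) (snd i)) C"
    and "negligible (W - (\<Union>i\<in>C. cball (fst i) (snd i)))"
proof -
  define K where "K = {(x, r). x \<in> W \<and> 0 < r \<and> cball x r \<subseteq> U}"
  have cov: "\<exists>i. i \<in> K \<and> x \<in> cball (fst i) (snd i) \<and> snd i < d" if x: "x \<in> W" "0 < d" for x d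
  proof -
    obtain r where r: "r > 0" "ball x r \<subseteq> U" using U x open_contains_ball by blast
    define s where "s = min (d/2) (r/2)"
    have "s > 0" "s < d" "s < r" using r x unfolding s_def by auto
    then have "cball x s \<subseteq> U"
      using r(2) cball_subset_ball_iff[of x s x r] by auto
    then show ?thesis using x \<open>s > 0\<close> \<open>s < d\<close> by (intro exI[of _ "(x, s)"]) (simp add: K_def)
  qed
  have K_pos: "\<And>i. i \<in> K \<Longrightarrow> 0 < snd i" by (auto simp: K_def)
  obtain C where C: "countable C" "C \<subseteq> K"
    and disj: "pairwise (\<lambda>i j. disjnt (cball (fst i) (snd i)) (cball (fst j) (snd j))) C"
    and neg: "negligible (W - (\<Union>i \<in> C. cball (fst i) (snd i)))"
    by (rule Vitali_covering_theorem_cballs[of K snd W fst, OF K_pos cov])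
  have "fst i \<in> W \<and> 0 < snd i \<and> cball (fst i) (snd i) \<subseteq> U" if "i \<in> C" for i
    using that C(2) by (cases i) (auto simp: K_def)
  moreover have "disjoint_family_on (\<lambda>i. cball (fst i) (snd i)) C"
    using disj by (auto simp: disjoint_family_on_def pairwise_def disjnt_def)
  ultimately show ?thesis
    using that C(1) neg by blast
qed

lemma emeasure_nonexpansive_image_le:
  fixes H :: "'a::euclidean_space \<Rightarrow> 'a"
  assumes nonexp: "\<And>x y. x \<in> W \<Longrightarrow> y \<in> W \<Longrightarrow> dist (H x) (H y) \<le> dist x y"
    and T: "T \<subseteq> H ` W" and U: "open U" "W \<subseteq> U"
  shows "emeasure lebesgue T \<le> emeasure lebesgue U"
proof -
  obtain C where C: "countable C"
    and C_in: "\<And>i. i \<in> C \<Longrightarrow> fst i \<in> W \<and> 0 < snd i \<and> cball (fst i) (snd i) \<subseteq> U"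
    and disj: "disjoint_family_on (\<lambda>i. cball (fst i) (snd i)) C"
    and neg: "negligible (W - (\<Union>i\<in>C. cball (fst i) (snd i)))"
    using Vitali_cballs_in_open[OF U] by blast
  define D where "D i = cball (fst i) (snd i)" for i :: "'a \<times> real"
  define E where "E i = cball (H (fst i)) (snd i)" for i :: "'a \<times> real"
  define N where "N = W - (\<Union>i \<in> C. D i)"
  have "negligible (H ` N)"
  proof (rule negligible_locally_Lipschitz_image[OF order_refl])
    show "negligible N" using neg unfolding N_def D_def .
    fix x assume "x \<in> N"
    then show "\<exists>T B. open T \<and> x \<in> T \<and> (\<forall>y\<in>N \<inter> T. norm (H y - H x) \<le> B * norm (y - x))"
      using nonexp by (intro exI[of _ UNIV] exI[of _ 1]) (auto simp: N_def dist_norm)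
  qed
  then have HN: "H ` N \<in> null_sets lebesgue" using negligible_iff_null_sets by blast
  have T_sub: "T \<subseteq> (\<Union>i\<in>C. E i) \<union> H ` N"
  proof
    fix y assume "y \<in> T"
    then obtain x where x: "x \<in> W" "y = H x" using T by blast
    show "y \<in> (\<Union>i\<in>C. E i) \<union> H ` N"
    proof (cases "x \<in> (\<Union>i \<in> C. D i)")
      case True
      then obtain i where i: "i \<in> C" "x \<in> D i" by blast
      then have "dist (H (fst i)) y \<le> snd i"
        using nonexp[of "fst i" x] x C_in[OF i(1)] by (simp add: D_def)
      then show ?thesis using i(1) by (auto simp: E_def)
    qed (use x in \<open>auto simp: N_def\<close>)
  qed
  have sets: "E i \<in> sets lebesgue" "D i \<in> sets lebesgue" for i by (auto simp: E_def D_def)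
  have UE: "(\<Union>i\<in>C. E i) \<in> sets lebesgue" using C sets by (intro sets.countable_UN') auto
  have "emeasure lebesgue T \<le> emeasure lebesgue ((\<Union>i\<in>C. E i) \<union> H ` N)"
    by (rule emeasure_mono[OF T_sub]) (use UE HN in auto)
  also have "\<dots> \<le> emeasure lebesgue (\<Union>i\<in>C. E i) + emeasure lebesgue (H ` N)"
    by (rule emeasure_subadditive) (use UE HN in auto)
  also have "emeasure lebesgue (H ` N) = 0" using HN by auto
  also have "emeasure lebesgue (\<Union>i\<in>C. E i) \<le> (\<integral>\<^sup>+i. emeasure lebesgue (E i) \<partial>count_space C)"
    by (rule emeasure_UN_countable_le[OF C]) (use sets in auto)
  also have "\<dots> = (\<integral>\<^sup>+i. emeasure lebesgue (D i) \<partial>count_space C)"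
  proof (rule nn_integral_cong)
    fix i assume "i \<in> space (count_space C)"
    then show "emeasure lebesgue (E i) = emeasure lebesgue (D i)"
      using C_in[of i] by (simp add: E_def D_def emeasure_cball)
  qed
  also have "\<dots> = emeasure lebesgue (\<Union>i\<in>C. D i)"
    using disj sets C unfolding D_def by (intro emeasure_UN_countable[symmetric]) auto
  also have "\<dots> \<le> emeasure lebesgue U"
    using C_in U(1) by (intro emeasure_mono) (auto simp: D_def)
  finally show ?thesis by simp
qed

lemma measure_nonexpansive_image_le:
  fixes H :: "'a::euclidean_space \<Rightarrow> 'a"
  assumes W: "W \<in> lmeasurable"
    and nonexp: "\<And>x y. x \<in> W \<Longrightarrow> y \<in> W \<Longrightarrow> dist (H x) (H y) \<le> dist x y"
    and T: "T \<in> lmeasurable" "T \<subseteq> H ` W"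
  shows "measure lebesgue T \<le> measure lebesgue W"
proof (rule field_le_epsilon)
  fix e :: real assume e: "e > 0"
  obtain U where U: "open U" "W \<subseteq> U" "U - W \<in> lmeasurable" "emeasure lebesgue (U - W) < ennreal e"
    using sets_lebesgue_outer_open[OF fmeasurableD[OF W] e] by blast
  have "emeasure lebesgue T \<le> emeasure lebesgue U"
    by (rule emeasure_nonexpansive_image_le[OF nonexp T(2) U(1,2)])
  also have "\<dots> = emeasure lebesgue W + emeasure lebesgue (U - W)"
    using U(2,3) W by (subst plus_emeasure) (auto simp: Un_absorb1)
  also have "\<dots> \<le> ennreal (measure lebesgue W) + ennreal e"
    using U(4) W by (intro add_mono) (auto simp: emeasure_eq_measure2)
  also have "\<dots> = ennreal (measure lebesgue W + e)"
    using e by (simp add: ennreal_plus)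
  finally have "ennreal (measure lebesgue T) \<le> ennreal (measure lebesgue W + e)"
    using T(1) by (simp add: emeasure_eq_measure2)
  then show "measure lebesgue T \<le> measure lebesgue W + e"
    using e by (subst (asm) ennreal_le_iff) auto
qed

section \<open>The Legendre transform\<close>

lemma linear_minus_min_quadratic_le:
  fixes k R a s :: real
  assumes k: "k > 0" and s: "s \<ge> 0" and a: "a \<le> k * R"
  shows "a * s - k * min (s\<^sup>2) (R * s) \<le> a\<^sup>2 / (4 * k)"
proof (cases "s\<^sup>2 \<le> R * s")
  case True
  have "a\<^sup>2 / (4 * k) - (a * s - k * s\<^sup>2) = (a - 2 * k * s)\<^sup>2 / (4 * k)"
    using k by (simp add: field_simps power2_eq_square)
  then show ?thesis
    using True k by (simp add: min_def) (smt (verit) divide_nonneg_pos zero_le_power2)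
next
  case False
  then have "a * s \<le> k * R * s" using a s by (simp add: mult_right_mono)
  then show ?thesis
    using False k by (simp add: min_def mult.assoc) (smt (verit) divide_nonneg_pos zero_le_power2)
qed

lemma legendre_eq_of_subgradient:
  assumes "\<And>y. \<psi> y \<ge> \<psi> y0 + q \<bullet> (y - y0)"
  shows "legendre \<psi> q = ereal (q \<bullet> y0 - \<psi> y0)"
  unfolding legendre_def
proof (rule antisym)
  show "(SUP x. ereal (q \<bullet> x - \<psi> x)) \<le> ereal (q \<bullet> y0 - \<psi> y0)"
  proof (rule SUP_least)
    fix x
    show "ereal (q \<bullet> x - \<psi> x) \<le> ereal (q \<bullet> y0 - \<psi> y0)"
      using assms[of x] by (simp add: inner_diff_right)
  qed
qed (rule SUP_upper, simp)

lemma legendre_shift_le: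
  fixes \<psi> :: "real^'n \<Rightarrow> real"
  assumes k: "k > 0"
    and growth: "\<And>y. \<psi> y - \<psi> y0 - q \<bullet> (y - y0) \<ge> k * min ((norm (y - y0))\<^sup>2) (R * norm (y - y0))"
    and v: "norm v \<le> k * R"
  shows "legendre \<psi> (q + v) \<le> ereal (q \<bullet> y0 - \<psi> y0 + v \<bullet> y0 + (norm v)\<^sup>2 / (4 * k))"
  unfolding legendre_def
proof (rule SUP_least)
  fix x
  have "v \<bullet> (x - y0) \<le> norm v * norm (x - y0)"
    by (rule norm_cauchy_schwarz)
  also have "\<dots> \<le> (norm v)\<^sup>2 / (4 * k) + k * min ((norm (x - y0))\<^sup>2) (R * norm (x - y0))"
    using linear_minus_min_quadratic_le[OF k norm_ge_zero v, of "x - y0"] by linarith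
  also have "\<dots> \<le> (norm v)\<^sup>2 / (4 * k) + (\<psi> x - \<psi> y0 - q \<bullet> (x - y0))"
    using growth[of x] by simp
  finally show "ereal ((q + v) \<bullet> x - \<psi> x) \<le> ereal (q \<bullet> y0 - \<psi> y0 + v \<bullet> y0 + (norm v)\<^sup>2 / (4 * k))"
    by (simp add: inner_add_left inner_diff_right algebra_simps)
qed

text \<open>Under such growth, moving the slope from \<open>q\<close> to \<open>q + v\<close> raises \<open>\<psi>\<^sup>*\<close> by only
  \<open>v \<bullet> y0 + O(|v|\<^sup>2)\<close>, which leaves no room for a second point of \<open>\<partial>\<psi>\<^sup>*(q)\<close>.\<close>

lemma subdiff_legendre_unique:
  fixes \<psi> :: "real^'n \<Rightarrow> real"
  assumes k: "k > 0" and R: "R > 0"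
    and growth: "\<And>y. \<psi> y - \<psi> y0 - q \<bullet> (y - y0) \<ge> k * min ((norm (y - y0))\<^sup>2) (R * norm (y - y0))"
    and y1: "y1 \<in> subdiff_ereal (legendre \<psi>) q"
  shows "y1 = y0"
proof (rule ccontr)
  assume "y1 \<noteq> y0"
  define d where "d = y1 - y0"
  define m where "m = norm d"
  have m: "m > 0" using \<open>y1 \<noteq> y0\<close> by (simp add: m_def d_def)
  define e where "e = min (2 * k) (k * R / m)"
  have e: "e > 0" "e * m \<le> k * R" "e \<le> 2 * k"
    using k R m by (auto simp: e_def min_def field_simps)
  have "\<psi> y \<ge> \<psi> y0 + q \<bullet> (y - y0)" for y
    using growth[of y] k R by (smt (verit) min_def mult_nonneg_nonneg norm_ge_zero zero_le_power2)
  then have "legendre \<psi> q = ereal (q \<bullet> y0 - \<psi> y0)"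
    by (rule legendre_eq_of_subgradient)
  then have "ereal (q \<bullet> y0 - \<psi> y0 + e * (y1 \<bullet> d)) \<le> legendre \<psi> (q + e *\<^sub>R d)"
    using y1 unfolding subdiff_ereal_def
    by (metis (no_types, lifting) add_diff_cancel_left' mem_Collect_eq inner_scaleR_right
        plus_ereal.simps(1))
  also have "\<dots> \<le> ereal (q \<bullet> y0 - \<psi> y0 + (e *\<^sub>R d) \<bullet> y0 + (norm (e *\<^sub>R d))\<^sup>2 / (4 * k))"
    using e(1,2) by (intro legendre_shift_le[OF k growth]) (simp add: m_def mult.commute)
  finally have "e * (y1 \<bullet> d) \<le> e * (d \<bullet> y0) + (e * m)\<^sup>2 / (4 * k)"
    using e(1) by (simp add: m_def power_mult_distrib)
  then have "e * m\<^sup>2 \<le> (e * m)\<^sup>2 / (4 * k)"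
    by (simp add: d_def m_def inner_diff_left inner_diff_right inner_commute power2_norm_eq_inner
        algebra_simps)
  then have "4 * k \<le> e"
    using k e(1) m by (simp add: field_simps power2_eq_square)
  then show False using e(3) k by simp
qed

lemma legendre_comp_linear:
  fixes g :: "real^'n \<Rightarrow> real^'n"
  assumes "linear g" "surj g"
  shows "legendre (\<psi> \<circ> g) (adjoint g q) = legendre \<psi> q"
proof -
  have "range (\<lambda>x. ereal (adjoint g q \<bullet> x - (\<psi> \<circ> g) x)) = (\<lambda>y. ereal (q \<bullet> y - \<psi> y)) ` range g"
    using assms(1) by (auto simp: adjoint_inner image_image)
  then show ?thesis
    unfolding legendre_def using assms(2) by simp
qed

lemma subdiff_legendre_comp_linear:
  fixes g :: "real^'n \<Rightarrow> real^'n"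
  assumes g: "linear g" "bij g" and y: "y \<in> subdiff_ereal (legendre \<psi>) q"
  shows "inv g y \<in> subdiff_ereal (legendre (\<psi> \<circ> g)) (adjoint g q)"
proof -
  have L: "legendre (\<psi> \<circ> g) (adjoint g r) = legendre \<psi> r" for r
    using g by (simp add: legendre_comp_linear bij_is_surj)
  have "legendre (\<psi> \<circ> g) p \<ge> legendre (\<psi> \<circ> g) (adjoint g q) + ereal (inv g y \<bullet> (p - adjoint g q))"
    for p
  proof -
    obtain r where p: "p = adjoint g r"
      using bij_adjoint[OF g] by (metis bij_is_surj surj_def)
    have "inv g y \<bullet> (p - adjoint g q) = adjoint g (r - q) \<bullet> inv g y"
      unfolding p linear_diff[OF adjoint_linear[OF g(1)], symmetric] by (rule inner_commute)
    also have "\<dots> = (r - q) \<bullet> y"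
      using g by (simp add: adjoint_inner bij_is_surj surj_f_inv_f)
    finally have "inv g y \<bullet> (p - adjoint g q) = y \<bullet> (r - q)"
      by (simp add: inner_commute)
    then show ?thesis
      using y by (simp add: L p subdiff_ereal_def)
  qed
  then show ?thesis
    using y by (simp add: L subdiff_ereal_def)
qed

lemma subdiff_comp_linear:
  fixes g :: "real^'n \<Rightarrow> real^'n"
  assumes g: "linear g" "surj g" and sub: "\<And>z. \<psi> (g z) \<ge> \<psi> (g z0) + adjoint g q \<bullet> (z - z0)"
  shows "q \<in> subdiff \<psi> (g z0)"
  unfolding subdiff_def
proof clarify
  fix y
  obtain z where "y = g z" using g(2) by (metis surj_def)
  then show "\<psi> y \<ge> \<psi> (g z0) + q \<bullet> (y - g z0)"
    using sub[of z] g(1) by (simp add: adjoint_inner linear_diff)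
qed

section \<open>Touching paraboloids in normalized position\<close>

lemma norm_diff_square: "(norm (z - z0))\<^sup>2 + 2 * (z0 \<bullet> (z - z0)) = (norm z)\<^sup>2 - (norm z0)\<^sup>2"
  by (simp add: power2_norm_eq_inner inner_diff_left inner_diff_right inner_commute)

locale normalized_section =
  fixes \<phi> :: "'a::euclidean_space \<Rightarrow> real" and n t :: real and a :: 'a
  assumes convex: "convex_on UNIV \<phi>" and n_ge_1: "n \<ge> 1" and t_pos: "t > 0"
    and base_point: "\<phi> a = 0" "norm a \<le> n"
    and sublevel_in_ball: "\<And>z. \<phi> z \<le> t \<Longrightarrow> norm z \<le> n"
begin

definition curv :: real where "curv = t / (8 * n\<^sup>2)"
definition rad :: real where "rad = t / (6 * n)"

definition touches :: "'a \<Rightarrow> 'a \<Rightarrow> bool" where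
  "touches z0 p \<longleftrightarrow> norm z0 \<le> 2 * n \<and> norm (p - (2 * curv) *\<^sub>R z0) \<le> rad \<and>
     (\<forall>z. norm z \<le> 2 * n \<longrightarrow> \<phi> z - \<phi> z0 \<ge> curv * (norm (z - z0))\<^sup>2 + p \<bullet> (z - z0))"

definition touching_slopes :: "'a set" where "touching_slopes = {p. \<exists>z0. touches z0 p}"

lemma curv_pos: "curv > 0"
  using t_pos n_ge_1 by (simp add: curv_def)

lemma rad_pos: "rad > 0"
  using t_pos n_ge_1 by (simp add: rad_def)

lemma continuous_phi: "continuous_on UNIV \<phi>"
  by (rule convex_on_continuous[OF open_UNIV convex])

lemma touches_in_sublevel:
  assumes "touches z0 p"
  shows "\<phi> z0 \<le> t"
proof -
  define p0 where "p0 = p - (2 * curv) *\<^sub>R z0"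
  have z0: "norm z0 \<le> 2 * n" and p0: "norm p0 \<le> rad"
    using assms by (simp_all add: touches_def p0_def)
  have "norm a \<le> 2 * n" using base_point n_ge_1 by simp
  then have "\<phi> a - \<phi> z0 \<ge> curv * (norm (a - z0))\<^sup>2 + p \<bullet> (a - z0)"
    using assms by (simp add: touches_def)
  also have "p \<bullet> (a - z0) = p0 \<bullet> (a - z0) + curv * (2 * (z0 \<bullet> (a - z0)))"
    by (simp add: p0_def inner_diff_left)
  finally have "\<phi> z0 \<le> - curv * ((norm (a - z0))\<^sup>2 + 2 * (z0 \<bullet> (a - z0))) - p0 \<bullet> (a - z0)"
    using base_point by (simp add: algebra_simps)
  also have "\<dots> = curv * ((norm z0)\<^sup>2 - (norm a)\<^sup>2) - p0 \<bullet> (a - z0)"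
    by (subst norm_diff_square) (simp add: algebra_simps)
  also have "\<dots> \<le> curv * (2 * n)\<^sup>2 + rad * (3 * n)"
  proof -
    have "(norm z0)\<^sup>2 - (norm a)\<^sup>2 \<le> (2 * n)\<^sup>2"
      using power_mono[OF z0 norm_ge_zero, of 2] zero_le_power2[of "norm a"] by linarith
    then have "curv * ((norm z0)\<^sup>2 - (norm a)\<^sup>2) \<le> curv * (2 * n)\<^sup>2"
      using curv_pos by (simp add: mult_left_mono)
    moreover have "norm (a - z0) \<le> 3 * n"
      using base_point(2) z0 norm_triangle_ineq4[of a z0] by linarith
    then have "- (p0 \<bullet> (a - z0)) \<le> rad * (3 * n)"
      using norm_cauchy_schwarz[of "- p0" "a - z0"] p0 rad_pos
      by (smt (verit) inner_minus_left mult_mono norm_ge_zero norm_minus_cancel)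
    ultimately show ?thesis by linarith
  qed
  also have "\<dots> = t"
    using n_ge_1 by (simp add: curv_def rad_def power2_eq_square field_simps)
  finally show ?thesis .
qed

lemma touches_norm: "touches z0 p \<Longrightarrow> norm z0 \<le> n"
  using touches_in_sublevel sublevel_in_ball by blast

text \<open>Outside the ball of radius \<open>n\<close> around \<open>z0\<close>, convexity propagates the quadratic
  bound from the sphere of radius \<open>n\<close> as a linear one.\<close>

lemma touches_growth:
  assumes "touches z0 p"
  shows "\<phi> z - \<phi> z0 - p \<bullet> (z - z0) \<ge> curv * min ((norm (z - z0))\<^sup>2) (n * norm (z - z0))"
proof (cases "norm (z - z0) \<le> n")
  case True
  then have "norm z \<le> 2 * n"
    using touches_norm[OF assms] norm_triangle_ineq[of z0 "z - z0"] by simp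
  then have "\<phi> z - \<phi> z0 - p \<bullet> (z - z0) \<ge> curv * (norm (z - z0))\<^sup>2"
    using assms by (auto simp: touches_def)
  then show ?thesis
    using curv_pos by (smt (verit) min.cobounded1 mult_left_mono)
next
  case False
  define s where "s = norm (z - z0)"
  define l where "l = n / s"
  have s: "s > n" using False by (simp add: s_def)
  have l: "0 < l" "l < 1" using s n_ge_1 by (auto simp: l_def field_simps)
  define z' where "z' = (1 - l) *\<^sub>R z0 + l *\<^sub>R z"
  have z'_z0: "z' - z0 = l *\<^sub>R (z - z0)" by (simp add: z'_def algebra_simps)
  moreover have "z \<noteq> z0" using s n_ge_1 by (auto simp: s_def)
  ultimately have "norm (z' - z0) = n" using l s n_ge_1 by (simp add: l_def s_def)
  moreover have "norm z' \<le> 2 * n"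
    using calculation touches_norm[OF assms] norm_triangle_ineq[of z0 "z' - z0"] by simp
  ultimately have "\<phi> z' - \<phi> z0 \<ge> curv * n\<^sup>2 + l * (p \<bullet> (z - z0))"
    using assms z'_z0 by (auto simp: touches_def)
  moreover have "\<phi> z' \<le> (1 - l) * \<phi> z0 + l * \<phi> z"
    unfolding z'_def using l by (intro convex_onD[OF convex]) auto
  ultimately have "l * (\<phi> z - \<phi> z0 - p \<bullet> (z - z0)) \<ge> curv * n\<^sup>2"
    by (simp add: algebra_simps)
  then have "\<phi> z - \<phi> z0 - p \<bullet> (z - z0) \<ge> curv * n\<^sup>2 / l"
    using l by (simp add: field_simps)
  also have "curv * n\<^sup>2 / l = curv * n * s"
    using s n_ge_1 by (simp add: l_def power2_eq_square field_simps)
  moreover have "n * s \<le> s\<^sup>2" using s n_ge_1 by (simp add: power2_eq_square)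
  ultimately show ?thesis by (simp add: s_def min_def)
qed

lemma touches_subgradient: "touches z0 p \<Longrightarrow> \<phi> z \<ge> \<phi> z0 + p \<bullet> (z - z0)"
  using touches_growth[of z0 p z] curv_pos n_ge_1
  by (smt (verit) min_def mult_nonneg_nonneg norm_ge_zero zero_le_power2)

lemma touches_unique:
  assumes "touches z0 p" "touches z1 p"
  shows "z0 = z1"
proof -
  have "\<phi> z1 - \<phi> z0 \<ge> curv * (norm (z1 - z0))\<^sup>2 + p \<bullet> (z1 - z0)"
       "\<phi> z0 - \<phi> z1 \<ge> curv * (norm (z0 - z1))\<^sup>2 + p \<bullet> (z0 - z1)"
    using assms by (auto simp: touches_def)
  then have "2 * curv * (norm (z1 - z0))\<^sup>2 \<le> 0"
    by (simp add: norm_minus_commute inner_diff_right)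
  then show ?thesis
    using curv_pos by (simp add: mult_le_0_iff)
qed

text \<open>Strong monotonicity \<open>(p - q) \<bullet> (z0 - z1) \<ge> 2 curv |z0 - z1|\<^sup>2\<close> of touching slopes makes
  \<open>p \<mapsto> p - 2 curv z0\<close> nonexpansive.\<close>

lemma touches_shift_nonexpansive:
  assumes "touches z0 p" "touches z1 q"
  shows "dist (p - (2 * curv) *\<^sub>R z0) (q - (2 * curv) *\<^sub>R z1) \<le> dist p q"
proof -
  define u where "u = p - q"
  define w where "w = z0 - z1"
  have "\<phi> z1 - \<phi> z0 \<ge> curv * (norm w)\<^sup>2 + p \<bullet> (z1 - z0)"
       "\<phi> z0 - \<phi> z1 \<ge> curv * (norm w)\<^sup>2 + q \<bullet> (z0 - z1)"
    using assms by (auto simp: touches_def w_def norm_minus_commute)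
  moreover have "p \<bullet> (z1 - z0) + q \<bullet> (z0 - z1) = - (u \<bullet> w)"
    by (simp add: u_def w_def inner_diff_left inner_diff_right)
  ultimately have uw: "u \<bullet> w \<ge> 2 * curv * (norm w)\<^sup>2" by linarith
  have "(norm (u - (2 * curv) *\<^sub>R w))\<^sup>2 = (norm u)\<^sup>2 - 4 * curv * (u \<bullet> w) + 4 * curv\<^sup>2 * (norm w)\<^sup>2"
    unfolding power2_norm_eq_inner
    by (simp add: inner_diff_left inner_diff_right inner_commute[of w u] power2_eq_square algebra_simps)
  also have "\<dots> \<le> (norm u)\<^sup>2"
  proof -
    have "4 * curv * (2 * curv * (norm w)\<^sup>2) \<le> 4 * curv * (u \<bullet> w)"
      using uw curv_pos by (intro mult_left_mono) auto
    moreover have "4 * curv * (2 * curv * (norm w)\<^sup>2) = 8 * (curv\<^sup>2 * (norm w)\<^sup>2)"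
      by (simp add: power2_eq_square)
    moreover have "0 \<le> curv\<^sup>2 * (norm w)\<^sup>2" by simp
    ultimately show ?thesis by linarith
  qed
  finally have "norm (u - (2 * curv) *\<^sub>R w) \<le> norm u"
    using power2_le_imp_le by fastforce
  moreover have "(p - (2 * curv) *\<^sub>R z0) - (q - (2 * curv) *\<^sub>R z1) = u - (2 * curv) *\<^sub>R w"
    by (simp add: u_def w_def algebra_simps)
  ultimately show ?thesis by (simp only: dist_norm u_def)
qed

text \<open>A minimizer \<open>z0\<close> of \<open>\<phi> z - curv |z|\<^sup>2 - p0 \<bullet> z\<close> on the ball of radius \<open>2 n\<close> is a touching point
  with slope \<open>p0 + 2 curv z0\<close>.\<close>

lemma touches_exists:
  assumes "norm p0 \<le> rad"
  shows "\<exists>z0. touches z0 (p0 + (2 * curv) *\<^sub>R z0)"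
proof -
  define F where "F z = \<phi> z - curv * (norm z)\<^sup>2 - p0 \<bullet> z" for z
  have "continuous_on (cball 0 (2 * n)) F"
    unfolding F_def by (intro continuous_intros continuous_on_subset[OF continuous_phi]) auto
  moreover have "cball (0 :: 'a) (2 * n) \<noteq> {}" using n_ge_1 by simp
  ultimately obtain z0 where z0: "z0 \<in> cball 0 (2 * n)"
    and min: "\<And>z. z \<in> cball 0 (2 * n) \<Longrightarrow> F z0 \<le> F z"
    using continuous_attains_inf[OF compact_cball] by blast
  have "touches z0 (p0 + (2 * curv) *\<^sub>R z0)"
    unfolding touches_def
  proof (intro conjI allI impI)
    show "norm z0 \<le> 2 * n" using z0 by simp
    show "norm (p0 + (2 * curv) *\<^sub>R z0 - (2 * curv) *\<^sub>R z0) \<le> rad" using assms by simp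
    fix z :: 'a assume "norm z \<le> 2 * n"
    then have "F z0 \<le> F z" using min by simp
    moreover have "curv * (norm (z - z0))\<^sup>2 + (p0 + (2 * curv) *\<^sub>R z0) \<bullet> (z - z0)
        = curv * ((norm (z - z0))\<^sup>2 + 2 * (z0 \<bullet> (z - z0))) + p0 \<bullet> (z - z0)"
      by (simp add: inner_add_left algebra_simps)
    then have "curv * (norm (z - z0))\<^sup>2 + (p0 + (2 * curv) *\<^sub>R z0) \<bullet> (z - z0)
        = curv * ((norm z)\<^sup>2 - (norm z0)\<^sup>2) + p0 \<bullet> (z - z0)"
      by (simp only: norm_diff_square)
    ultimately show "\<phi> z - \<phi> z0 \<ge> curv * (norm (z - z0))\<^sup>2 + (p0 + (2 * curv) *\<^sub>R z0) \<bullet> (z - z0)"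
      by (simp add: F_def inner_diff_right algebra_simps)
  qed
  then show ?thesis ..
qed

lemma closed_touching_slopes: "closed touching_slopes"
proof -
  define T :: "('a \<times> 'a) set" where "T =
    {x. norm (snd x - (2 * curv) *\<^sub>R fst x) \<le> rad} \<inter>
    (\<Inter>z\<in>cball 0 (2 * n). {x. curv * (norm (z - fst x))\<^sup>2 + snd x \<bullet> (z - fst x) \<le> \<phi> z - \<phi> (fst x)})"
  have "closed T"
    unfolding T_def
    by (intro closed_Int closed_INT ballI closed_Collect_le)
      (auto intro!: continuous_intros continuous_on_compose2[OF continuous_phi])
  then have "closed {p. \<exists>z0. z0 \<in> cball 0 (2 * n) \<and> (z0, p) \<in> T}"
    by (intro closed_compact_projection) auto
  moreover have "{p. \<exists>z0. z0 \<in> cball 0 (2 * n) \<and> (z0, p) \<in> T} = touching_slopes"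
    unfolding T_def touching_slopes_def touches_def by auto
  ultimately show ?thesis by simp
qed

lemma touching_slopes_subset_cball: "touching_slopes \<subseteq> cball 0 (rad + 2 * curv * (2 * n))"
proof
  fix p assume "p \<in> touching_slopes"
  then obtain z0 where "norm (p - (2 * curv) *\<^sub>R z0) \<le> rad" "norm z0 \<le> 2 * n"
    by (auto simp: touching_slopes_def touches_def)
  moreover have "norm p \<le> norm (p - (2 * curv) *\<^sub>R z0) + 2 * curv * norm z0"
    using norm_triangle_ineq[of "p - (2 * curv) *\<^sub>R z0" "(2 * curv) *\<^sub>R z0"] curv_pos by simp
  moreover have "2 * curv * norm z0 \<le> 2 * curv * (2 * n)"
    using calculation(2) curv_pos by (intro mult_left_mono) auto
  ultimately show "p \<in> cball 0 (rad + 2 * curv * (2 * n))"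
    by (simp only: mem_cball_0)
qed

lemma compact_touching_slopes: "compact touching_slopes"
  using closed_touching_slopes touching_slopes_subset_cball
  by (metis bounded_cball bounded_subset compact_eq_bounded_closed)

lemma measure_ball_le_touching_slopes:
  "measure lebesgue (cball (0 :: 'a) rad) \<le> measure lebesgue touching_slopes"
proof -
  define Z where "Z p = (SOME z0. touches z0 p)" for p
  define H where "H p = p - (2 * curv) *\<^sub>R Z p" for p
  have Z: "touches (Z p) p" if "p \<in> touching_slopes" for p
    using that unfolding touching_slopes_def Z_def by (auto intro: someI_ex)
  show ?thesis
  proof (rule measure_nonexpansive_image_le[of touching_slopes H])
    show "touching_slopes \<in> lmeasurable" by (rule lmeasurable_compact[OF compact_touching_slopes])
    show "dist (H p) (H q) \<le> dist p q" if "p \<in> touching_slopes" "q \<in> touching_slopes" for p q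
      unfolding H_def by (rule touches_shift_nonexpansive[OF Z[OF that(1)] Z[OF that(2)]])
    show "cball 0 rad \<in> lmeasurable" by simp
    show "cball 0 rad \<subseteq> H ` touching_slopes"
    proof
      fix p0 :: 'a assume "p0 \<in> cball 0 rad"
      then obtain z0 where z0: "touches z0 (p0 + (2 * curv) *\<^sub>R z0)"
        using touches_exists by auto
      define p where "p = p0 + (2 * curv) *\<^sub>R z0"
      have p: "p \<in> touching_slopes" using z0 by (auto simp: touching_slopes_def p_def)
      have "Z p = z0" using touches_unique[OF Z[OF p]] z0 by (simp add: p_def)
      then have "H p = p0" by (simp add: H_def p_def)
      then show "p0 \<in> H ` touching_slopes" using p by (metis image_eqI)
    qed
  qed
qed

end

section \<open>Sections squeezed between two ellipsoids\<close>

locale ellipsoidal_section =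
  fixes \<psi> :: "real^'n \<Rightarrow> real" and x0 :: "real^'n" and t :: real and A :: "real^'n^'n"
    and g :: "real^'n \<Rightarrow> real^'n"
  assumes convex: "convex_on UNIV \<psi>" and value_x0: "\<psi> x0 = 0" and t_pos: "t > 0"
    and inner_ellipsoid: "{x. normA A x \<le> 1} \<subseteq> sect \<psi> x0 0 t"
    and outer_ellipsoid: "sect \<psi> x0 0 t \<subseteq> {x. normA A x \<le> real CARD('n)}"
    and linear_g: "linear g" and bij_g: "bij g" and normA_g: "\<And>z. normA A (g z) = norm z"
begin

lemma sect_eq: "sect \<psi> x0 0 t = {x. \<psi> x \<le> t}"
  by (simp add: sect_def value_x0)

lemma g_inv [simp]: "g (inv g y) = y"
  using bij_g by (simp add: bij_is_surj surj_f_inv_f)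

lemma normA_eq: "normA A y = norm (inv g y)"
  using normA_g[of "inv g y"] by simp

sublocale normalized: normalized_section "\<psi> \<circ> g" "real CARD('n)" t "inv g x0"
proof
  show "convex_on UNIV (\<psi> \<circ> g)" by (rule convex_on_linear_comp[OF linear_g convex])
  have "x0 \<in> sect \<psi> x0 0 t" using t_pos by (simp add: sect_eq value_x0)
  then show "norm (inv g x0) \<le> real CARD('n)"
    using outer_ellipsoid by (auto simp: normA_eq)
  fix z assume "(\<psi> \<circ> g) z \<le> t"
  then have "g z \<in> sect \<psi> x0 0 t" by (simp add: sect_eq)
  then show "norm z \<le> real CARD('n)"
    using outer_ellipsoid normA_g by auto
qed (use t_pos value_x0 in auto)

definition section_slopes :: "(real^'n) set" where
  "section_slopes = adjoint g -` normalized.touching_slopes"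

lemma section_slopes_touching:
  assumes "q \<in> section_slopes"
  obtains z0 where "normalized.touches z0 (adjoint g q)"
  using assms by (auto simp: section_slopes_def normalized.touching_slopes_def)

lemma subdiff_legendre_section_slopes:
  assumes "normalized.touches z0 (adjoint g q)" "y \<in> subdiff_ereal (legendre \<psi>) q"
  shows "y = g z0"
proof -
  have "inv g y \<in> subdiff_ereal (legendre (\<psi> \<circ> g)) (adjoint g q)"
    by (rule subdiff_legendre_comp_linear[OF linear_g bij_g assms(2)])
  then have "inv g y = z0"
    using normalized.touches_growth[OF assms(1)] normalized.curv_pos
    by (intro subdiff_legendre_unique[of "normalized.curv" "real CARD('n)"]) auto
  then show ?thesis by (metis g_inv)
qed

lemma section_slopes_subdiff: "section_slopes \<subseteq> subdiff_set \<psi> (sect \<psi> x0 0 t)"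
proof
  fix q assume "q \<in> section_slopes"
  then obtain z0 where z0: "normalized.touches z0 (adjoint g q)" by (rule section_slopes_touching)
  then have "q \<in> subdiff \<psi> (g z0)"
    using normalized.touches_subgradient[OF z0] linear_g bij_g
    by (intro subdiff_comp_linear) (auto simp: bij_is_surj)
  moreover have "g z0 \<in> sect \<psi> x0 0 t"
    using normalized.touches_in_sublevel[OF z0] by (simp add: sect_eq)
  ultimately show "q \<in> subdiff_set \<psi> (sect \<psi> x0 0 t)"
    by (auto simp: subdiff_set_def)
qed

lemma subdiff_legendre_section_slopes_in_sect:
  "subdiff_ereal_set (legendre \<psi>) section_slopes \<subseteq> sect \<psi> x0 0 t"
proof
  fix y assume "y \<in> subdiff_ereal_set (legendre \<psi>) section_slopes"
  then obtain q where q: "q \<in> section_slopes" "y \<in> subdiff_ereal (legendre \<psi>) q"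
    by (auto simp: subdiff_ereal_set_def)
  then obtain z0 where z0: "normalized.touches z0 (adjoint g q)" by (metis section_slopes_touching)
  then show "y \<in> sect \<psi> x0 0 t"
    using normalized.touches_in_sublevel subdiff_legendre_section_slopes[OF z0 q(2)]
    by (simp add: sect_eq)
qed

lemma section_slopes_growth:
  assumes q: "q \<in> section_slopes" and y0: "y0 \<in> subdiff_ereal (legendre \<psi>) q"
    and y: "normA A y \<le> 2 * real CARD('n)"
  shows "\<psi> y - \<psi> y0 \<ge> t / (8 * (real CARD('n))\<^sup>2) * (normA A (y - y0))\<^sup>2 + q \<bullet> (y - y0)"
proof -
  obtain z0 where z0: "normalized.touches z0 (adjoint g q)" using q by (rule section_slopes_touching)
  define z where "z = inv g y"
  have y_eq: "y = g z" and y0_eq: "y0 = g z0"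
    using subdiff_legendre_section_slopes[OF z0 y0] by (simp_all add: z_def)
  have "norm z \<le> 2 * real CARD('n)" using y by (simp add: z_def normA_eq)
  then have "\<psi> (g z) - \<psi> (g z0) \<ge> normalized.curv * (norm (z - z0))\<^sup>2 + adjoint g q \<bullet> (z - z0)"
    using z0 by (simp add: normalized.touches_def)
  then show ?thesis
    by (simp add: y_eq y0_eq linear_diff[OF linear_g, symmetric] normA_g adjoint_inner[OF linear_g]
        normalized.curv_def)
qed

lemma compact_sect: "compact (sect \<psi> x0 0 t)"
proof -
  have "closed (sect \<psi> x0 0 t)"
    unfolding sect_eq
    by (intro closed_Collect_le continuous_on_const convex_on_continuous[OF open_UNIV convex])
  moreover have "sect \<psi> x0 0 t \<subseteq> g ` cball 0 (real CARD('n))"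
  proof
    fix x assume "x \<in> sect \<psi> x0 0 t"
    then have "inv g x \<in> cball 0 (real CARD('n))"
      using outer_ellipsoid by (auto simp: normA_eq)
    then show "x \<in> g ` cball 0 (real CARD('n))" by (metis g_inv image_eqI)
  qed
  moreover have "compact (g ` cball 0 (real CARD('n)))"
    by (intro compact_linear_image linear_g compact_cball)
  ultimately show ?thesis
    by (meson bounded_subset compact_eq_bounded_closed)
qed

lemma compact_section_slopes: "compact section_slopes"
  unfolding section_slopes_def
  by (rule compact_linear_vimage[OF adjoint_linear[OF linear_g] bij_adjoint[OF linear_g bij_g]
        normalized.compact_touching_slopes])

lemma measure_section_slopes:
  "measure lebesgue section_slopes \<ge> (unit_ball_vol (real CARD('n)))\<^sup>2 / (6 * real CARD('n)) ^ CARD('n)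
     * t ^ CARD('n) / measure lebesgue (sect \<psi> x0 0 t)"
proof -
  define \<omega> where "\<omega> = unit_ball_vol (real CARD('n))"
  define B where "B = cball (0 :: real^'n) 1"
  have measure_cball: "measure lebesgue (cball (0 :: real^'n) r) = \<omega> * r ^ CARD('n)" if "r \<ge> 0" for r
    using content_cball[OF that, of "0 :: real^'n"] by (simp add: \<omega>_def)
  have "\<omega> > 0" unfolding \<omega>_def by (rule unit_ball_vol_pos) simp
  have "compact (g ` B)"
    unfolding B_def by (intro compact_linear_image linear_g compact_cball)
  moreover have "g ` B \<subseteq> sect \<psi> x0 0 t"
    using inner_ellipsoid normA_g by (auto simp: B_def)
  ultimately have gB: "measure lebesgue (g ` B) \<le> measure lebesgue (sect \<psi> x0 0 t)"
    by (intro measure_mono_fmeasurable fmeasurableD lmeasurable_compact compact_sect)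
  have "\<omega> * (\<omega> * normalized.rad ^ CARD('n))
      \<le> measure lebesgue B * measure lebesgue normalized.touching_slopes"
    using normalized.measure_ball_le_touching_slopes measure_cball[of 1] measure_cball[of normalized.rad]
      normalized.rad_pos \<open>\<omega> > 0\<close> by (simp add: B_def)
  also have "\<dots> = measure lebesgue (g ` B) * measure lebesgue section_slopes"
    unfolding section_slopes_def B_def
    by (rule measure_image_mult_measure_adjoint_vimage[symmetric, OF linear_g bij_g compact_cball
          normalized.compact_touching_slopes])
  also have "\<dots> \<le> measure lebesgue (sect \<psi> x0 0 t) * measure lebesgue section_slopes"
    using gB by (simp add: mult_right_mono)
  finally have prod: "\<omega>\<^sup>2 / (6 * real CARD('n)) ^ CARD('n) * t ^ CARD('n)
      \<le> measure lebesgue (sect \<psi> x0 0 t) * measure lebesgue section_slopes"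
    by (simp add: normalized.rad_def power_divide power2_eq_square)
  moreover have "0 < \<omega>\<^sup>2 / (6 * real CARD('n)) ^ CARD('n) * t ^ CARD('n)"
    using \<open>\<omega> > 0\<close> t_pos by simp
  ultimately have "measure lebesgue (sect \<psi> x0 0 t) > 0"
    by (smt (verit) measure_nonneg mult_nonneg_nonneg zero_less_mult_iff)
  then show ?thesis
    using prod unfolding \<omega>_def by (subst pos_divide_le_eq) (auto simp: mult.commute)
qed

end

theorem mainTheorem15:
  "\<exists>c::real. c > 0 \<and>
    (\<forall>(\<psi>::real^'n \<Rightarrow> real) (x0::real^'n) (t::real) (A::real^'n^'n).
      convex_on UNIV \<psi> \<and> \<psi> x0 = 0 \<and> 0 \<in> subdiff \<psi> x0 \<and> t > 0 \<and> pos_def_sym A \<and>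
      {x. normA A x \<le> 1} \<subseteq> sect \<psi> x0 0 t \<and>
      sect \<psi> x0 0 t \<subseteq> {x. normA A x \<le> real CARD('n)}
      \<longrightarrow>
      (\<exists>V. V \<subseteq> subdiff_set \<psi> (sect \<psi> x0 0 t) \<and> V \<in> sets lebesgue \<and>
         measure lebesgue V \<ge> c * t ^ CARD('n) / measure lebesgue (sect \<psi> x0 0 t) \<and>
         subdiff_ereal_set (legendre \<psi>) V \<subseteq> sect \<psi> x0 0 t \<and>
         (\<forall>q\<in>V. \<forall>y0\<in>subdiff_ereal (legendre \<psi>) q.
            \<forall>y. normA A y \<le> 2 * real CARD('n) \<longrightarrow>
              \<psi> y - \<psi> y0 \<ge> t / (8 * (real CARD('n))\<^sup>2) * (normA A (y - y0))\<^sup>2 + q \<bullet> (y - y0))))"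
proof (intro exI[of _ "(unit_ball_vol (real CARD('n)))\<^sup>2 / (6 * real CARD('n)) ^ CARD('n)"] conjI allI impI)
  have "unit_ball_vol (real CARD('n)) \<noteq> 0"
    using unit_ball_vol_pos[of "real CARD('n)"] by linarith
  then show "0 < (unit_ball_vol (real CARD('n)))\<^sup>2 / (6 * real CARD('n)) ^ CARD('n)"
    by simp
  fix \<psi> :: "real^'n \<Rightarrow> real" and x0 t and A :: "real^'n^'n"
  assume hyps: "convex_on UNIV \<psi> \<and> \<psi> x0 = 0 \<and> 0 \<in> subdiff \<psi> x0 \<and> t > 0 \<and> pos_def_sym A \<and>
      {x. normA A x \<le> 1} \<subseteq> sect \<psi> x0 0 t \<and> sect \<psi> x0 0 t \<subseteq> {x. normA A x \<le> real CARD('n)}"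
  then have "pos_def_sym A" by blast
  then obtain g :: "real^'n \<Rightarrow> real^'n" where "linear g" "bij g" "\<And>z. normA A (g z) = norm z"
    using exists_normA_isometry by metis
  then interpret ellipsoidal_section \<psi> x0 t A g
    using hyps by (simp add: ellipsoidal_section_def)
  show "\<exists>V. V \<subseteq> subdiff_set \<psi> (sect \<psi> x0 0 t) \<and> V \<in> sets lebesgue \<and>
      measure lebesgue V \<ge> (unit_ball_vol (real CARD('n)))\<^sup>2 / (6 * real CARD('n)) ^ CARD('n) * t ^ CARD('n)
        / measure lebesgue (sect \<psi> x0 0 t) \<and>
      subdiff_ereal_set (legendre \<psi>) V \<subseteq> sect \<psi> x0 0 t \<and>
      (\<forall>q\<in>V. \<forall>y0\<in>subdiff_ereal (legendre \<psi>) q. \<forall>y. normA A y \<le> 2 * real CARD('n) \<longrightarrow>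
         \<psi> y - \<psi> y0 \<ge> t / (8 * (real CARD('n))\<^sup>2) * (normA A (y - y0))\<^sup>2 + q \<bullet> (y - y0))"
    by (intro exI[of _ section_slopes] conjI ballI allI impI section_slopes_subdiff measure_section_slopes
        subdiff_legendre_section_slopes_in_sect section_slopes_growth
        fmeasurableD[OF lmeasurable_compact[OF compact_section_slopes]])
qed

end
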